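(* Let $0\le s\le t\le T$, $\bar\omega\in\Omega$, $\xi\in UC_b(\Omega)$ and $\varepsilon>0$. Then there exist a sequence $(\hat\omega^i)_{i\ge1}$ in $\Omega^s$, an $\mathcal F^s_t$-measurable partition $(E^i)_{i\ge1}$ of $\Omega^s$ and a sequence $(P^i)_{i\ge1}$ in $\overline{\mathcal P}^t_S$ such that (i) $\|\omega-\hat\omega^i\|_{[s,t]}\le\varepsilon$ for all $\omega\in E^i$; (ii) $P^i\in\mathcal P(t,\bar\omega\otimes_s\omega)$ for all $\omega\in E^i$ and $\inf_{\omega\in E^i}\deg(t,\bar\omega\otimes_s\omega,P^i)>0$; (iii) $V_t(\xi)(\bar\omega\otimes_s\hat\omega^i)\le E^{P^i}[\xi^{t,\bar\omega\otimes_s\hat\omega^i}]+\varepsilon$.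
   Context: Fix $T>0$ and $d\ge1$. Let $\Omega=\{\omega\in C([0,T];\mathbb R^d):\omega_0=0\}$, $\|\omega\|_t:=\sup_{0\le s\le t}|\omega_s|$, $\|\omega\|_{[s,t]}:=\sup_{s\le u\le t}|\omega_u|$. For $t\in[0,T]$ let $\Omega^t=\{\omega\in C([t,T];\mathbb R^d):\omega_t=0\}$ with canonical process $B^t$, Wiener measure $P^t_0$ and raw filtration $\mathbb F^t=(\mathcal F^t_u)_{t\le u\le T}$ ($\Omega^0=\Omega$). For $0\le s\le t\le T$, $\omega\in\Omega^s$, $\tilde\omega\in\Omega^t$: $(\omega\otimes_t\tilde\omega)_u:=\omega_u\mathbf 1_{[s,t)}(u)+(\omega_t+\tilde\omega_u)\mathbf 1_{[t,T]}(u)$, $s\le u\le T$; for a function $\xi$ on $\Omega^s$, $\xi^{t,\omega}(\tilde\omega):=\xi(\omega\otimes_t\tilde\omega)$. $\hat a^t_u:=\limsup_{n}n(\langle B^t\rangle_u-\langle B^t\rangle_{u-1/n})$ with $\langle B^t\rangle$ the pathwise quadratic variation. $\mathbb S^+_d$ ($\mathbb S^{>0}_d$): positive semidefinite (strictly positive definite) symmetric matrices. $\overline{\mathcal P}^t_S$ is the set of laws $P^\alpha:=P^t_0\circ(X^\alpha)^{-1}$, $X^\alpha_u:=\int_t^u\alpha_r^{1/2}\,dB^t_r$ (Itô integral under $P^t_0$), $\alpha$ ranging over $\mathbb F^t$-progressively measurable $\mathbb S^{>0}_d$-valued processes with $\int_t^T|\alpha_r|dr<\infty$ $P^t_0$-a.s.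 $\mathbf D:\Omega\times[0,T]\to2^{\mathbb S^+_d}$ is a progressively measurable closed-set-valued process; $\mathrm{Int}^\delta D:=\{x\in D:B_\delta(x)\subseteq D\}$; $\mathbf D^{t,\omega}_u(\tilde\omega):=\mathbf D_u(\omega\otimes_t\tilde\omega)$. For $(t,\omega)\in[0,T]\times\Omega$, $\mathcal P(t,\omega)$ is the set of $P\in\overline{\mathcal P}^t_S$ for which there is $\delta>0$ with $\hat a^t_u(\tilde\omega)\in\mathrm{Int}^\delta\mathbf D^{t,\omega}_u(\tilde\omega)$ for $du\times P$-a.e. $(u,\tilde\omega)\in[t,T]\times\Omega^t$; with $\delta^*$ the supremum of such $\delta$, $\deg(t,\omega,P):=(\delta^*/2)\wedge1$. Standing assumption: $\mathbf D$ is uniformly continuous, i.e. for all $\delta>0$ and $(t,\omega)$ there is $\varepsilon>0$ such that $\|\omega-\omega'\|_t\le\varepsilon$ implies $\mathrm{Int}^\delta\mathbf D^{t,\omega}_u(\tilde\omega)\subseteq\mathrm{Int}^\varepsilon\mathbf D^{t,\omega'}_u(\tilde\omega)$ for all $(u,\tilde\omega)\in[t,T]\times\Omega^t$; and $\mathcal P(t,\omega)\neq\emptyset$ for all $(t,\omega)$. $UC_b(\Omega)$: bounded $\|\cdot\|_T$-uniformly continuous functions on $\Omega$. $V_t(\xi)(\omega):=\sup_{P\in\mathcal P(t,\omega)}E^P[\xi^{t,\omega}]$. *)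

theory Defs
  imports "HOL-Probability.Probability"
begin

type_synonym 'd path = "real \<Rightarrow> real^'d"
type_synonym 'd mat = "real^'d^'d"

definition Omega :: "real \<Rightarrow> real \<Rightarrow> ('d::finite) path set" where
  "Omega T t = {\<omega>. continuous_on {t..T} \<omega> \<and> \<omega> t = 0 \<and> (\<forall>u. u \<notin> {t..T} \<longrightarrow> \<omega> u = 0)}"

definition Ft :: "real \<Rightarrow> real \<Rightarrow> real \<Rightarrow> ('d::finite) path set set" where
  "Ft T t u = sigma_sets (Omega T t)
     {{\<omega> \<in> Omega T t. \<omega> r \<in> A} | r A. r \<in> {t..u} \<and> A \<in> sets (borel :: (real^'d) measure)}"

definition FM :: "real \<Rightarrow> real \<Rightarrow> real \<Rightarrow> ('d::finite) path measure" where
  "FM T t u = measure_of (Omega T t) (Ft T t u) (\<lambda>_. 0)"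

definition is_wiener :: "real \<Rightarrow> real \<Rightarrow> ('d::finite) path measure \<Rightarrow> bool" where
  "is_wiener T t P \<longleftrightarrow> prob_space P \<and> space P = Omega T t \<and> sets P = Ft T t T \<and>
    (\<forall>(n::nat) (r::nat \<Rightarrow> real). (\<forall>k\<le>n. r k \<in> {t..T}) \<and> (\<forall>k<n. r k < r (Suc k)) \<longrightarrow>
       prob_space.indep_vars P (\<lambda>_. borel)
          (\<lambda>(k, i) \<omega>. \<omega> (r (Suc k)) $ i - \<omega> (r k) $ i) ({..<n} \<times> (UNIV :: 'd set)) \<and>
       (\<forall>k<n. \<forall>i::'d. distributed P lborel (\<lambda>\<omega>. \<omega> (r (Suc k)) $ i - \<omega> (r k) $ i)
                         (normal_density 0 (sqrt (r (Suc k) - r k)))))"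

definition wiener :: "real \<Rightarrow> real \<Rightarrow> ('d::finite) path measure" where
  "wiener T t = (THE P. is_wiener T t P)"

definition psd :: "('d::finite) mat \<Rightarrow> bool" where
  "psd A \<longleftrightarrow> transpose A = A \<and> (\<forall>x. 0 \<le> x \<bullet> (A *v x))"

definition posdef :: "('d::finite) mat \<Rightarrow> bool" where
  "posdef A \<longleftrightarrow> transpose A = A \<and> (\<forall>x. x \<noteq> 0 \<longrightarrow> 0 < x \<bullet> (A *v x))"

definition msqrt :: "('d::finite) mat \<Rightarrow> 'd mat" where
  "msqrt A = (THE S. psd S \<and> S ** S = A)"

definition outer :: "real^'d \<Rightarrow> real^'d \<Rightarrow> ('d::finite) mat" where
  "outer x y = (\<chi> i j. x $ i * y $ j)"

definition progressive :: "real \<Rightarrow> real \<Rightarrow> (('d::finite) path \<Rightarrow> real \<Rightarrow> 'b::topological_space) \<Rightarrow> bool" where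
  "progressive T t H \<longleftrightarrow> (\<forall>u\<in>{t..T}.
     (\<lambda>(r, \<omega>). H \<omega> r) \<in> borel_measurable (restrict_space lborel {t..u} \<Otimes>\<^sub>M FM T t u))"

definition step_proc :: "nat \<Rightarrow> (nat \<Rightarrow> real) \<Rightarrow> (nat \<Rightarrow> ('d::finite) path \<Rightarrow> 'd mat) \<Rightarrow> 'd path \<Rightarrow> real \<Rightarrow> 'd mat" where
  "step_proc n r h \<omega> u = (\<Sum>k<n. if r k < u \<and> u \<le> r (Suc k) then h k \<omega> else 0)"

definition step_int :: "nat \<Rightarrow> (nat \<Rightarrow> real) \<Rightarrow> (nat \<Rightarrow> ('d::finite) path \<Rightarrow> 'd mat) \<Rightarrow> 'd path \<Rightarrow> real \<Rightarrow> real^'d" where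
  "step_int n r h \<omega> u = (\<Sum>k<n. h k \<omega> *v (\<omega> (min u (r (Suc k))) - \<omega> (min u (r k))))"

definition simple_data :: "real \<Rightarrow> real \<Rightarrow> nat \<Rightarrow> (nat \<Rightarrow> real) \<Rightarrow> (nat \<Rightarrow> ('d::finite) path \<Rightarrow> 'd mat) \<Rightarrow> bool" where
  "simple_data T t n r h \<longleftrightarrow> r 0 = t \<and> r n = T \<and> (\<forall>k<n. r k < r (Suc k)) \<and>
     (\<forall>k<n. h k \<in> borel_measurable (FM T t (r k)) \<and> (\<exists>C. \<forall>\<omega>\<in>Omega T t. norm (h k \<omega>) \<le> C))"

(* X is (a version of) the Ito integral  int_t^. H dB^t  under P^t_0: a continuous adapted process that is
   the ucp-limit of elementary integrals of step processes approximating H in probability in L^2(dr) *)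
definition is_ito_integral :: "real \<Rightarrow> real \<Rightarrow> (('d::finite) path \<Rightarrow> real \<Rightarrow> 'd mat) \<Rightarrow> ('d path \<Rightarrow> 'd path) \<Rightarrow> bool" where
  "is_ito_integral T t H X \<longleftrightarrow>
     (\<forall>\<omega>\<in>Omega T t. X \<omega> \<in> Omega T t) \<and>
     X \<in> FM T t T \<rightarrow>\<^sub>M FM T t T \<and>
     (\<forall>u\<in>{t..T}. (\<lambda>\<omega>. X \<omega> u) \<in> borel_measurable (FM T t u)) \<and>
     (\<exists>n r h. (\<forall>m. simple_data T t (n m) (r m) (h m)) \<and>
        (\<forall>e>0. (\<lambda>m. measure (wiener T t)
            {\<omega> \<in> Omega T t. (LINT v:{t..T}|lborel. (norm (step_proc (n m) (r m) (h m) \<omega> v - H \<omega> v))\<^sup>2) > e})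
          \<longlonglongrightarrow> 0) \<and>
        (\<forall>e>0. (\<lambda>m. measure (wiener T t)
            {\<omega> \<in> Omega T t. \<exists>v\<in>{t..T}. norm (X \<omega> v - step_int (n m) (r m) (h m) \<omega> v) > e})
          \<longlonglongrightarrow> 0))"

definition PbarS :: "real \<Rightarrow> real \<Rightarrow> ('d::finite) path measure set" where
  "PbarS T t = {distr (wiener T t) (FM T t T) X | \<alpha> X.
     progressive T t \<alpha> \<and> (\<forall>\<omega>\<in>Omega T t. \<forall>v\<in>{t..T}. posdef (\<alpha> \<omega> v)) \<and>
     (AE \<omega> in wiener T t. set_integrable lborel {t..T} (\<lambda>v. norm (\<alpha> \<omega> v))) \<and>
     is_ito_integral T t (\<lambda>\<omega> v. msqrt (\<alpha> \<omega> v)) X}"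

(* pathwise quadratic variation (Karandikar): partitions by the stopping times tau^n_k *)
primrec ktau :: "real \<Rightarrow> real \<Rightarrow> nat \<Rightarrow> ('d::finite) path \<Rightarrow> nat \<Rightarrow> real" where
  "ktau T t n \<omega> 0 = t"
| "ktau T t n \<omega> (Suc k) =
     (let a = ktau T t n \<omega> k; S = {u \<in> {a..T}. norm (\<omega> u - \<omega> a) \<ge> 1 / 2 ^ n}
      in if S = {} then T else Inf S)"

definition qv_sum :: "real \<Rightarrow> real \<Rightarrow> nat \<Rightarrow> ('d::finite) path \<Rightarrow> real \<Rightarrow> 'd mat" where
  "qv_sum T t n \<omega> u = (\<Sum>k. outer (\<omega> (min u (ktau T t n \<omega> (Suc k))) - \<omega> (min u (ktau T t n \<omega> k)))
                                 (\<omega> (min u (ktau T t n \<omega> (Suc k))) - \<omega> (min u (ktau T t n \<omega> k))))"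

definition qv :: "real \<Rightarrow> real \<Rightarrow> ('d::finite) path \<Rightarrow> real \<Rightarrow> 'd mat" where
  "qv T t \<omega> u = (if uniformly_convergent_on {t..T} (\<lambda>n. qv_sum T t n \<omega>) \<and> u \<in> {t..T}
                  then lim (\<lambda>n. qv_sum T t n \<omega> u) else 0)"

(* \<hat>a^t_u = limsup_n n(<B^t>_u - <B^t>_{u-1/n}), entrywise (infinite entries mapped to 0 by real_of_ereal) *)
definition hat_a :: "real \<Rightarrow> real \<Rightarrow> ('d::finite) path \<Rightarrow> real \<Rightarrow> 'd mat" where
  "hat_a T t \<omega> u = (\<chi> i j. real_of_ereal (limsup (\<lambda>n::nat.
      ereal (real n * (qv T t \<omega> u $ i $ j - qv T t \<omega> (u - 1 / real n) $ i $ j)))))"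

definition IntD :: "real \<Rightarrow> ('d::finite) mat set \<Rightarrow> 'd mat set" where
  "IntD \<delta> S = {x \<in> S. {y. transpose y = y \<and> dist x y < \<delta>} \<subseteq> S}"

definition concat :: "real \<Rightarrow> real \<Rightarrow> ('d::finite) path \<Rightarrow> 'd path \<Rightarrow> 'd path" where
  "concat T t \<omega> \<omega>' = (\<lambda>u. if u < t then \<omega> u else if u \<le> T then \<omega> t + \<omega>' u else 0)"

definition Pgood :: "real \<Rightarrow> (('d::finite) path \<Rightarrow> real \<Rightarrow> 'd mat set) \<Rightarrow> real \<Rightarrow> 'd path \<Rightarrow> 'd path measure \<Rightarrow> real \<Rightarrow> bool" where
  "Pgood T D t \<omega> P \<delta> \<longleftrightarrow> (AE (u, \<omega>') in (restrict_space lborel {t..T} \<Otimes>\<^sub>M P).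
      hat_a T t \<omega>' u \<in> IntD \<delta> (D (concat T t \<omega> \<omega>') u))"

definition Pset :: "real \<Rightarrow> (('d::finite) path \<Rightarrow> real \<Rightarrow> 'd mat set) \<Rightarrow> real \<Rightarrow> 'd path \<Rightarrow> 'd path measure set" where
  "Pset T D t \<omega> = {P \<in> PbarS T t. \<exists>\<delta>>0. Pgood T D t \<omega> P \<delta>}"

(* deg(t,\<omega>,P) = (\<delta>*/2) \<and> 1, \<delta>* possibly +\<infinity> *)
definition deg :: "real \<Rightarrow> (('d::finite) path \<Rightarrow> real \<Rightarrow> 'd mat set) \<Rightarrow> real \<Rightarrow> 'd path \<Rightarrow> 'd path measure \<Rightarrow> real" where
  "deg T D t \<omega> P = real_of_ereal (min (Sup {ereal \<delta> | \<delta>. \<delta> > 0 \<and> Pgood T D t \<omega> P \<delta>} / 2) 1)"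

definition Vt :: "real \<Rightarrow> (('d::finite) path \<Rightarrow> real \<Rightarrow> 'd mat set) \<Rightarrow> ('d path \<Rightarrow> real) \<Rightarrow> real \<Rightarrow> 'd path \<Rightarrow> real" where
  "Vt T D \<xi> t \<omega> = (SUP P \<in> Pset T D t \<omega>. integral\<^sup>L P (\<lambda>\<omega>'. \<xi> (concat T t \<omega> \<omega>')))"

definition UCb :: "real \<Rightarrow> (('d::finite) path \<Rightarrow> real) set" where
  "UCb T = {\<xi>. (\<exists>C. \<forall>\<omega>\<in>Omega T 0. \<bar>\<xi> \<omega>\<bar> \<le> C) \<and>
     (\<forall>e>0. \<exists>\<delta>>0. \<forall>\<omega>\<in>Omega T 0. \<forall>\<omega>'\<in>Omega T 0.
        (\<forall>u\<in>{0..T}. norm (\<omega> u - \<omega>' u) \<le> \<delta>) \<longrightarrow> \<bar>\<xi> \<omega> - \<xi> \<omega>'\<bar> \<le> e)}"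

definition D_progressive :: "real \<Rightarrow> (('d::finite) path \<Rightarrow> real \<Rightarrow> 'd mat set) \<Rightarrow> bool" where
  "D_progressive T D \<longleftrightarrow> (\<forall>r\<in>{0..T}. \<forall>G. open G \<longrightarrow>
     {(u, \<omega>) \<in> {0..r} \<times> Omega T 0. D \<omega> u \<inter> G \<noteq> {}} \<in> sets (restrict_space lborel {0..r} \<Otimes>\<^sub>M FM T 0 r))"

definition D_closed_psd :: "real \<Rightarrow> (('d::finite) path \<Rightarrow> real \<Rightarrow> 'd mat set) \<Rightarrow> bool" where
  "D_closed_psd T D \<longleftrightarrow> (\<forall>\<omega>\<in>Omega T 0. \<forall>u\<in>{0..T}. closed (D \<omega> u) \<and> D \<omega> u \<subseteq> {A. psd A})"

definition D_unif_cont :: "real \<Rightarrow> (('d::finite) path \<Rightarrow> real \<Rightarrow> 'd mat set) \<Rightarrow> bool" where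
  "D_unif_cont T D \<longleftrightarrow> (\<forall>\<delta>>0. \<forall>t\<in>{0..T}. \<forall>\<omega>\<in>Omega T 0. \<exists>\<epsilon>>0. \<forall>\<omega>'\<in>Omega T 0.
     (\<forall>u\<in>{0..t}. norm (\<omega> u - \<omega>' u) \<le> \<epsilon>) \<longrightarrow>
     (\<forall>u\<in>{t..T}. \<forall>\<omega>''\<in>Omega T t.
        IntD \<delta> (D (concat T t \<omega> \<omega>'') u) \<subseteq> IntD \<epsilon> (D (concat T t \<omega>' \<omega>'') u)))"

end

theory Submission
  imports Defs
begin

(* Locally, at every history w = omega_bar (x)_s omega we
   pick an epsilon-optimal law P in P(t,w); it is admissible with some margin delta, and uniform
   continuity of D yields a radius e > 0 such that P stays admissible, with margin e, for every
   history e-close to w on [0,t] (robust_law, robust_near_optimal_law).  Globally, Omega^s is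
   partitioned into countably many F^s_t-measurable pieces, each contained in the [s,t]-ball around
   a centre whose radius is at most epsilon and at most the robustness radius of the centre
   (Omega_ball_partition).  Using the law chosen at the centre on the whole piece gives (i)-(iii),
   the degree bound coming from the uniform margin. *)

(* Uniform closeness
   of continuous paths on [s,t] is therefore decided by countably many evaluations, which is what
   makes the balls used below F^s_t-measurable. *)
definition grid_points :: "real \<Rightarrow> real \<Rightarrow> real set" where
  "grid_points s t = {s, t} \<union> (\<rat> \<inter> {s<..<t})"

lemma countable_grid_points: "countable (grid_points s t)"
  unfolding grid_points_def by (auto intro: countable_rat countable_Int1)

lemma grid_points_subset: "s \<le> t \<Longrightarrow> grid_points s t \<subseteq> {s..t}"
  by (auto simp: grid_points_def)

lemma closure_grid_points: "{s..t} \<subseteq> closure (grid_points s t)"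
proof
  fix u assume u: "u \<in> {s..t}"
  show "u \<in> closure (grid_points s t)"
  proof (cases "u = s \<or> u = t")
    case True then show ?thesis by (auto simp: grid_points_def intro: closure_subset[THEN subsetD])
  next
    case False
    with u have "s < u" "u < t" by auto
    show ?thesis unfolding closure_approachable
    proof (intro allI impI)
      fix e :: real assume "e > 0"
      obtain r where r: "r \<in> \<rat>" "max s (u - e) < r" "r < u"
        using Rats_dense_in_real[of "max s (u - e)" u] \<open>s < u\<close> \<open>e > 0\<close> by auto
      then show "\<exists>y\<in>grid_points s t. dist y u < e"
        using \<open>u < t\<close> by (intro bexI[of _ r]) (auto simp: grid_points_def dist_real_def)
    qed
  qed
qed

lemma norm_bound_from_grid_points:
  fixes f :: "real \<Rightarrow> 'a::real_normed_vector"
  assumes "s \<le> t" "continuous_on {s..t} f" "\<forall>u\<in>grid_points s t. norm (f u) \<le> c" "u \<in> {s..t}"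
  shows "norm (f u) \<le> c"
proof (rule continuous_on_closure_norm_le[of "grid_points s t"])
  have "closure (grid_points s t) \<subseteq> {s..t}"
    using assms(1) by (intro closure_minimal grid_points_subset) auto
  then show "continuous_on (closure (grid_points s t)) f"
    using assms(2) continuous_on_subset by blast
qed (use assms(3,4) closure_grid_points[of s t] in auto)

lemma sigma_algebra_Ft: "sigma_algebra (Omega T s) (Ft T s t)"
  unfolding Ft_def by (rule sigma_algebra_sigma_sets) auto

(* Sets of paths that stay uniformly close to a reference function at the grid points are
   F^s_t-measurable: they are countable intersections of cylinder sets. *)
lemma Ft_grid_ball:
  assumes "s \<le> t"
  shows "{\<omega>\<in>Omega T s. \<forall>u\<in>grid_points s t. norm (\<omega> u - q u) \<le> c} \<in> Ft T s t"
proof (rule sigma_algebra.sets_Collect_countable_All'[OF sigma_algebra_Ft _ countable_grid_points])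
  fix u assume "u \<in> grid_points s t"
  then have "u \<in> {s..t}" using grid_points_subset[OF assms] by auto
  then have "{\<omega>\<in>Omega T s. \<omega> u \<in> cball (q u) c} \<in> Ft T s t" unfolding Ft_def
    by (intro sigma_sets.Basic CollectI exI[of _ u] exI[of _ "cball (q u) c"] conjI refl)
      (auto intro!: borel_closed simp del: mem_cball)
  then show "{\<omega>\<in>Omega T s. norm (\<omega> u - q u) \<le> c} \<in> Ft T s t"
    by (simp add: dist_norm norm_minus_commute)
qed

(* Uniform grid of n+1 nodes on [s,t]; cell s t n u is the index of the node just left of u. *)
definition cell :: "real \<Rightarrow> real \<Rightarrow> nat \<Rightarrow> real \<Rightarrow> nat" where
  "cell s t n u = nat \<lfloor>real n * (u - s) / (t - s)\<rfloor>"

definition node :: "real \<Rightarrow> real \<Rightarrow> nat \<Rightarrow> nat \<Rightarrow> real" where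
  "node s t n k = s + real k * (t - s) / real n"

lemma node_of_cell:
  assumes "s \<le> t" "n > 0" "u \<in> {s..t}"
  shows "cell s t n u \<le> n" "node s t n (cell s t n u) \<in> {s..t}"
    "\<bar>u - node s t n (cell s t n u)\<bar> \<le> (t - s) / real n"
proof -
  let ?k = "cell s t n u"
  have "?k \<le> n \<and> node s t n ?k \<in> {s..u} \<and> u - node s t n ?k \<le> (t - s) / real n"
  proof (cases "s = t")
    case True then show ?thesis using assms by (simp add: cell_def node_def)
  next
    case False
    then have st: "s < t" using assms(1) by simp
    define x where "x = real n * (u - s) / (t - s)"
    have "0 \<le> x" "x \<le> real n" using assms st by (auto simp: x_def field_simps)
    then have k: "real ?k \<le> x" "x < real ?k + 1" "?k \<le> n"
      by (simp_all add: cell_def x_def[symmetric]) linarith+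
    have u: "u = s + x * (t - s) / real n" using assms st by (simp add: x_def field_simps)
    have "node s t n ?k \<le> u"
      unfolding node_def using k st assms(2) u by (simp add: divide_right_mono mult_right_mono)
    moreover have "u - node s t n ?k = (x - real ?k) * (t - s) / real n"
      using assms(2) by (simp add: u node_def field_simps)
    moreover have "(x - real ?k) * (t - s) / real n \<le> 1 * (t - s) / real n"
      using k st assms(2) by (intro divide_right_mono mult_right_mono) auto
    ultimately show ?thesis using k st assms by (auto simp: node_def)
  qed
  then show "?k \<le> n" "node s t n ?k \<in> {s..t}" "\<bar>u - node s t n ?k\<bar> \<le> (t - s) / real n"
    using assms(3) by auto
qed

(* Separability of C([s,t]) in the uniform norm: step functions on uniform grids with values in a
   countable dense set approximate every continuous function uniformly. *)
lemma countable_uniform_approximants: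
  fixes s t :: real
  assumes "s \<le> t"
  obtains Q :: "(real \<Rightarrow> 'a::euclidean_space) set" where "countable Q"
    "\<And>\<omega> e. continuous_on {s..t} \<omega> \<Longrightarrow> e > 0 \<Longrightarrow> \<exists>q\<in>Q. \<forall>u\<in>{s..t}. norm (\<omega> u - q u) < e"
proof -
  obtain V :: "'a set" where V: "countable V" "\<And>X. open X \<Longrightarrow> X \<noteq> {} \<Longrightarrow> \<exists>v\<in>V. v \<in> X"
    using countable_dense_setE by blast
  define Q where "Q = (\<lambda>(n, vs) u. (vs::'a list) ! cell s t n u) ` (UNIV \<times> lists V)"
  have "countable Q" unfolding Q_def using V(1) by (intro countable_image countable_SIGMA) auto
  moreover have "\<exists>q\<in>Q. \<forall>u\<in>{s..t}. norm (\<omega> u - q u) < e"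
    if \<omega>: "continuous_on {s..t} \<omega>" and e: "e > 0" for \<omega> e
  proof -
    obtain d where d: "d > 0"
      "\<And>x x'. x \<in> {s..t} \<Longrightarrow> x' \<in> {s..t} \<Longrightarrow> dist x' x < d \<Longrightarrow> dist (\<omega> x') (\<omega> x) < e/2"
      using compact_uniformly_continuous[OF \<omega> compact_Icc] e
      unfolding uniformly_continuous_on_def by (metis half_gt_zero)
    obtain m :: nat where "(t - s) / d < real m" using reals_Archimedean2 by blast
    then have "(t - s) / real (Suc m) < d" using d(1) by (simp add: field_simps)
    define n where "n = Suc m"
    have "\<exists>v\<in>V. v \<in> ball x (e/2)" for x
    proof (rule V(2))
      show "ball x (e/2) \<noteq> {}" using e by simp
    qed simp
    then have "\<forall>k. \<exists>v\<in>V. v \<in> ball (\<omega> (node s t n k)) (e/2)" by blast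
    then obtain vf where vf: "\<And>k. vf k \<in> V" "\<And>k. vf k \<in> ball (\<omega> (node s t n k)) (e/2)"
      by metis
    define vs where "vs = map vf [0..<Suc n]"
    have "(\<lambda>u. vs ! cell s t n u) \<in> Q" using vf(1) unfolding Q_def vs_def by force
    moreover have "norm (\<omega> u - vs ! cell s t n u) < e" if u: "u \<in> {s..t}" for u
    proof -
      let ?k = "cell s t n u"
      have k: "?k \<le> n" "node s t n ?k \<in> {s..t}" "dist (node s t n ?k) u < d"
        using node_of_cell[OF assms _ u, of n] \<open>(t - s) / real (Suc m) < d\<close>
        unfolding n_def dist_real_def abs_minus_commute[of u] by auto
      have "vs ! ?k = vf ?k"
        using k(1) unfolding vs_def by (metis diff_zero le_imp_less_Suc nth_map_upt add_0)
      moreover have "dist (\<omega> u) (vf ?k) < e"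
        using d(2)[OF u k(2) k(3)] vf(2)[of ?k, unfolded mem_ball] by (rule dist_triangle_half_r)
      ultimately show ?thesis by (simp add: dist_norm)
    qed
    ultimately show ?thesis by (intro bexI[of _ "\<lambda>u. vs ! cell s t n u"]) auto
  qed
  ultimately show ?thesis using that by blast
qed

lemma (in sigma_algebra) countable_cover_partition:
  assumes "countable A" "A \<noteq> {}" "\<And>a. a \<in> A \<Longrightarrow> B a \<in> M" "(\<Union>a\<in>A. B a) = \<Omega>"
  obtains g :: "nat \<Rightarrow> 'i" and E where "\<And>i. g i \<in> A" "\<And>i. E i \<in> M" "disjoint_family E"
    "(\<Union>i. E i) = \<Omega>" "\<And>i. E i \<subseteq> B (g i)"
proof
  let ?g = "from_nat_into A"
  show "?g i \<in> A" for i using from_nat_into[OF assms(2)] .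
  then show "disjointed (\<lambda>i. B (?g i)) i \<in> M" for i
    using assms(3) by (intro range_disjointed_sets[THEN range_subsetD]) auto
  show "disjoint_family (disjointed (\<lambda>i. B (?g i)))" by (rule disjoint_family_disjointed)
  have "range ?g = A" using assms(1,2) by simp
  then show "(\<Union>i. disjointed (\<lambda>i. B (?g i)) i) = \<Omega>"
    unfolding UN_disjointed_eq using assms(4) by (metis image_image)
  show "disjointed (\<lambda>i. B (?g i)) i \<subseteq> B (?g i)" for i by (rule disjointed_subset)
qed

lemma continuous_on_Omega: "\<omega> \<in> Omega T s \<Longrightarrow> t \<le> T \<Longrightarrow> continuous_on {s..t} \<omega>"
  by (auto simp: Omega_def intro: continuous_on_subset)

lemma Omega_close_from_grid_points:
  assumes "\<omega> \<in> Omega T s" "\<omega>' \<in> Omega T s" "s \<le> t" "t \<le> T"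
    and "\<forall>u\<in>grid_points s t. norm (\<omega> u - \<omega>' u) \<le> c"
  shows "\<forall>u\<in>{s..t}. norm (\<omega> u - \<omega>' u) \<le> c"
proof -
  have "continuous_on {s..t} (\<lambda>u. \<omega> u - \<omega>' u)"
    using assms(1,2,4) by (intro continuous_on_diff continuous_on_Omega)
  then show ?thesis using norm_bound_from_grid_points[OF assms(3) _ assms(5)] by blast
qed

(* Since the radius depends on the centre, we only keep balls
   B(q,m) of radius 1/(m+1) around approximants q which contain some path with
   r >= 2/(m+1), and take such a path as centre; the triangle inequality keeps the piece
   inside the ball of radius r around that centre. *)
lemma Omega_ball_partition:
  fixes r :: "('d::finite) path \<Rightarrow> real"
  assumes "s \<le> t" "t \<le> T" "\<forall>\<omega>\<in>Omega T s. r \<omega> > 0"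
  obtains c :: "nat \<Rightarrow> 'd path" and E where "\<And>i. c i \<in> Omega T s" "\<And>i. E i \<in> Ft T s t"
    "disjoint_family E" "(\<Union>i. E i) = Omega T s"
    "\<And>i \<omega> u. \<omega> \<in> E i \<Longrightarrow> u \<in> {s..t} \<Longrightarrow> norm (\<omega> u - c i u) \<le> r (c i)"
proof -
  let ?X = "Omega T s :: 'd path set"
  obtain Q :: "'d path set" where "countable Q" and
    Q: "\<And>\<omega> e. continuous_on {s..t} \<omega> \<Longrightarrow> e > 0 \<Longrightarrow> \<exists>q\<in>Q. \<forall>u\<in>{s..t}. norm (\<omega> u - q u) < e"
    using countable_uniform_approximants[OF assms(1)] by blast
  define B where "B = (\<lambda>(q, m). {\<omega>\<in>?X. \<forall>u\<in>grid_points s t. norm (\<omega> u - q u) \<le> 1 / (real m + 1)})"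
  define admissible where "admissible = (\<lambda>(m::nat) \<omega>. 2 / (real m + 1) \<le> r \<omega>)"
  define A where "A = {(q, m) \<in> Q \<times> UNIV. \<exists>\<omega>\<in>B (q, m). admissible m \<omega>}"
  define center where "center = (\<lambda>(q, m). SOME \<omega>. \<omega> \<in> B (q, m) \<and> admissible m \<omega>)"
  have center: "center p \<in> B p \<and> admissible (snd p) (center p)" if "p \<in> A" for p
  proof -
    obtain q m where p: "p = (q, m)" by fastforce
    have "\<exists>\<omega>. \<omega> \<in> B (q, m) \<and> admissible m \<omega>" using that by (auto simp: A_def p)
    from someI_ex[OF this] show ?thesis by (simp add: center_def p)
  qed
  have close: "norm (\<omega> u - center p u) \<le> r (center p)"
    if "p \<in> A" "\<omega> \<in> B p" "u \<in> {s..t}" for p \<omega> u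
  proof -
    obtain q m where p: "p = (q, m)" by fastforce
    have in_B: "\<omega> \<in> ?X" "center p \<in> ?X"
      "\<forall>v\<in>grid_points s t. norm (\<omega> v - q v) \<le> 1 / (real m + 1)"
      "\<forall>v\<in>grid_points s t. norm (q v - center p v) \<le> 1 / (real m + 1)"
      using \<open>\<omega> \<in> B p\<close> center[OF \<open>p \<in> A\<close>] by (auto simp: B_def p norm_minus_commute)
    have "\<forall>v\<in>grid_points s t. norm (\<omega> v - center p v) \<le> 2 / (real m + 1)"
      using in_B(3,4) norm_diff_triangle_le by fastforce
    then have "norm (\<omega> u - center p u) \<le> 2 / (real m + 1)"
      using Omega_close_from_grid_points[OF in_B(1,2) assms(1,2)] \<open>u \<in> {s..t}\<close> by blast
    also have "\<dots> \<le> r (center p)" using center[OF \<open>p \<in> A\<close>] by (simp add: admissible_def p)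
    finally show ?thesis .
  qed
  have cover: "\<exists>p\<in>A. \<omega> \<in> B p" if \<omega>: "\<omega> \<in> ?X" for \<omega>
  proof -
    obtain m :: nat where "2 / r \<omega> < real m" using reals_Archimedean2 by blast
    then have "admissible m \<omega>"
      using bspec[OF assms(3) \<omega>] by (simp add: admissible_def field_simps)
    obtain q where "q \<in> Q" "\<forall>u\<in>{s..t}. norm (\<omega> u - q u) < 1 / (real m + 1)"
      using Q[OF continuous_on_Omega[OF \<omega> assms(2)], of "1 / (real m + 1)"] by auto
    then have "\<omega> \<in> B (q, m)"
      using \<omega> grid_points_subset[OF assms(1)] by (fastforce simp: B_def)
    then show ?thesis
      using \<open>q \<in> Q\<close> \<open>admissible m \<omega>\<close> unfolding A_def by blast
  qed
  have "countable A"
    by (rule countable_subset[of _ "Q \<times> (UNIV :: nat set)"]) (auto simp: A_def \<open>countable Q\<close>)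
  moreover have "(\<lambda>_. 0) \<in> ?X" by (simp add: Omega_def)
  then have "A \<noteq> {}" using cover by blast
  moreover have "B p \<in> Ft T s t" if "p \<in> A" for p
    using Ft_grid_ball[OF assms(1)] by (cases p) (simp add: B_def)
  moreover have "(\<Union>p\<in>A. B p) = ?X" using cover by (auto simp: B_def)
  ultimately show ?thesis
  proof (rule sigma_algebra.countable_cover_partition[OF sigma_algebra_Ft])
    fix g :: "nat \<Rightarrow> 'd path \<times> nat" and E :: "nat \<Rightarrow> 'd path set"
    assume g: "\<And>i. g i \<in> A" and E: "\<And>i. E i \<in> Ft T s t" "disjoint_family E"
      "(\<Union>i. E i) = ?X" "\<And>i. E i \<subseteq> B (g i)"
    show ?thesis
    proof (rule that[of "\<lambda>i. center (g i)" E])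
      show "center (g i) \<in> ?X" for i using center[OF g, of i] by (auto simp: B_def split: prod.splits)
      show "norm (\<omega> u - center (g i) u) \<le> r (center (g i))" if "\<omega> \<in> E i" "u \<in> {s..t}" for i \<omega> u
        using close[OF g] E(4) that by blast
    qed (use E in auto)
  qed
qed

lemma concat_in_Omega:
  assumes "\<omega>b \<in> Omega T 0" "\<omega> \<in> Omega T s" "0 \<le> s" "s \<le> T"
  shows "concat T s \<omega>b \<omega> \<in> Omega T 0"
proof -
  have cont: "continuous_on {0..T} \<omega>b" "continuous_on {s..T} \<omega>" and "\<omega> s = 0"
    using assms by (auto simp: Omega_def)
  have "continuous_on {0..T} (\<lambda>u. if u \<le> s then \<omega>b u else \<omega>b s + \<omega> u)"
  proof (rule continuous_on_cases_le)
    show "continuous_on {u \<in> {0..T}. u \<le> s} \<omega>b" by (rule continuous_on_subset[OF cont(1)]) auto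
    show "continuous_on {u \<in> {0..T}. s \<le> u} (\<lambda>u. \<omega>b s + \<omega> u)"
      by (intro continuous_intros continuous_on_subset[OF cont(2)]) auto
  qed (use \<open>\<omega> s = 0\<close> in auto)
  then have "continuous_on {0..T} (concat T s \<omega>b \<omega>)"
    by (rule continuous_on_eq) (use \<open>\<omega> s = 0\<close> in \<open>auto simp: concat_def\<close>)
  then show ?thesis using assms \<open>\<omega> s = 0\<close> by (auto simp: concat_def Omega_def)
qed

lemma concat_close:
  assumes "\<forall>u\<in>{s..t}. norm (\<omega> u - \<omega>' u) \<le> e" "0 \<le> e" "t \<le> T"
  shows "\<forall>u\<in>{0..t}. norm (concat T s \<omega>b \<omega> u - concat T s \<omega>b \<omega>' u) \<le> e"
  using assms by (auto simp: concat_def)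

lemma space_PbarS: "P \<in> PbarS T t \<Longrightarrow> space P = Omega T t"
  by (auto simp: PbarS_def FM_def space_measure_of_conv)

lemma Pgood_transfer:
  assumes "P \<in> PbarS T t" "Pgood T D t w P \<delta>"
    and "\<forall>u\<in>{t..T}. \<forall>\<omega>\<in>Omega T t. IntD \<delta> (D (concat T t w \<omega>) u) \<subseteq> IntD e (D (concat T t w' \<omega>) u)"
  shows "Pgood T D t w' P e"
proof -
  let ?M = "restrict_space lborel {t..T} \<Otimes>\<^sub>M P"
  have "space ?M = {t..T} \<times> Omega T t"
    using space_PbarS[OF assms(1)] by (simp add: space_pair_measure)
  then have "AE (u, \<omega>) in ?M. u \<in> {t..T} \<and> \<omega> \<in> Omega T t"
    using AE_space[of ?M] by (simp add: case_prod_beta mem_Times_iff)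
  moreover have "AE (u, \<omega>) in ?M. hat_a T t \<omega> u \<in> IntD \<delta> (D (concat T t w \<omega>) u)"
    using assms(2) by (simp add: Pgood_def)
  ultimately show ?thesis
    unfolding Pgood_def by eventually_elim (use assms(3) in blast)
qed

lemma deg_lower_bound:
  assumes "\<delta> > 0" "Pgood T D t w P \<delta>"
  shows "min (\<delta> / 2) 1 \<le> deg T D t w P"
proof -
  define S where "S = {ereal \<delta> | \<delta>. \<delta> > 0 \<and> Pgood T D t w P \<delta>}"
  have "ereal \<delta> \<le> Sup S" unfolding S_def using assms by (intro Sup_upper) auto
  moreover have "deg T D t w P = real_of_ereal (min (Sup S / 2) 1)" by (simp add: deg_def S_def)
  ultimately show ?thesis by (cases "Sup S") (auto simp: min_def)
qed

lemma SUP_almost_attained: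
  fixes f :: "'a \<Rightarrow> real"
  assumes "A \<noteq> {}" "\<epsilon> > 0"
  shows "\<exists>x\<in>A. (SUP x\<in>A. f x) \<le> f x + \<epsilon>"
proof (cases "bdd_above (f ` A)")
  case True
  then obtain x where "x \<in> A" "(SUP x\<in>A. f x) - \<epsilon> < f x"
    using less_cSUP_iff[OF assms(1) True, of "(SUP x\<in>A. f x) - \<epsilon>"] assms(2) by auto
  then show ?thesis by (intro bexI[of _ x]) auto
next
  case False
  then obtain x where "x \<in> A" "(SUP x\<in>A. f x) < f x"
    unfolding bdd_above_def by (auto simp: not_le)
  then show ?thesis using assms(2) by (auto intro!: bexI[of _ x])
qed

definition robust_law :: "real \<Rightarrow> (('d::finite) path \<Rightarrow> real \<Rightarrow> 'd mat set) \<Rightarrow> ('d path \<Rightarrow> real) \<Rightarrow>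
    real \<Rightarrow> real \<Rightarrow> 'd path \<Rightarrow> 'd path measure \<Rightarrow> real \<Rightarrow> bool" where
  "robust_law T D \<xi> t \<epsilon> w P e \<longleftrightarrow> P \<in> PbarS T t \<and> e > 0 \<and>
     Vt T D \<xi> t w \<le> integral\<^sup>L P (\<lambda>\<omega>. \<xi> (concat T t w \<omega>)) + \<epsilon> \<and>
     (\<forall>w'\<in>Omega T 0. (\<forall>u\<in>{0..t}. norm (w u - w' u) \<le> e) \<longrightarrow> Pgood T D t w' P e)"

(* Local step: every history admits a robust epsilon-optimal law.  The law comes from the
   definition of V_t as a supremum, the robustness radius from the uniform continuity of D. *)
lemma robust_near_optimal_law:
  assumes "D_unif_cont T D" "t \<in> {0..T}" "w \<in> Omega T 0" "Pset T D t w \<noteq> {}" "\<epsilon> > 0"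
  shows "\<exists>P e. robust_law T D \<xi> t \<epsilon> w P e"
proof -
  obtain P where P: "P \<in> Pset T D t w" "Vt T D \<xi> t w \<le> integral\<^sup>L P (\<lambda>\<omega>. \<xi> (concat T t w \<omega>)) + \<epsilon>"
    using SUP_almost_attained[OF assms(4,5)] unfolding Vt_def by blast
  then obtain \<delta> where "\<delta> > 0" "Pgood T D t w P \<delta>" and "P \<in> PbarS T t" by (auto simp: Pset_def)
  moreover obtain e where "e > 0" and e: "\<forall>w'\<in>Omega T 0. (\<forall>u\<in>{0..t}. norm (w u - w' u) \<le> e) \<longrightarrow>
      (\<forall>u\<in>{t..T}. \<forall>\<omega>\<in>Omega T t. IntD \<delta> (D (concat T t w \<omega>) u) \<subseteq> IntD e (D (concat T t w' \<omega>) u))"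
    using assms(1)[unfolded D_unif_cont_def, rule_format, OF \<open>\<delta> > 0\<close> assms(2,3)] by blast
  moreover have "Pgood T D t w' P e" if "w' \<in> Omega T 0" "\<forall>u\<in>{0..t}. norm (w u - w' u) \<le> e" for w'
    using Pgood_transfer[OF \<open>P \<in> PbarS T t\<close> \<open>Pgood T D t w P \<delta>\<close>] e that by blast
  ultimately show ?thesis using P(2) unfolding robust_law_def by blast
qed

lemma robust_law_near:
  assumes "robust_law T D \<xi> t \<epsilon> w P e" "w' \<in> Omega T 0" "\<forall>u\<in>{0..t}. norm (w u - w' u) \<le> e"
  shows "P \<in> Pset T D t w'" "min (e / 2) 1 \<le> deg T D t w' P"
proof -
  have "Pgood T D t w' P e" "e > 0" "P \<in> PbarS T t"
    using assms unfolding robust_law_def by blast+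
  then show "P \<in> Pset T D t w'" "min (e / 2) 1 \<le> deg T D t w' P"
    using deg_lower_bound by (auto simp: Pset_def)
qed

theorem lemma4p3:
  fixes T s t \<epsilon> :: real
    and D :: "('d::finite) path \<Rightarrow> real \<Rightarrow> 'd mat set"
    and \<xi> :: "'d path \<Rightarrow> real"
    and \<omega>bar :: "'d path"
  assumes "T > 0"
    and "D_progressive T D" and "D_closed_psd T D" and "D_unif_cont T D"
    and "\<forall>t\<in>{0..T}. \<forall>\<omega>\<in>Omega T 0. Pset T D t \<omega> \<noteq> {}"
    and "0 \<le> s" and "s \<le> t" and "t \<le> T"
    and "\<omega>bar \<in> Omega T 0" and "\<xi> \<in> UCb T" and "\<epsilon> > 0"
  shows "\<exists>(\<omega>hat :: nat \<Rightarrow> 'd path) (E :: nat \<Rightarrow> 'd path set) (P :: nat \<Rightarrow> 'd path measure).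
     (\<forall>i. \<omega>hat i \<in> Omega T s) \<and>
     (\<forall>i. E i \<in> Ft T s t) \<and> disjoint_family E \<and> (\<Union>i. E i) = Omega T s \<and>
     (\<forall>i. P i \<in> PbarS T t) \<and>
     (\<forall>i. \<forall>\<omega>\<in>E i. \<forall>u\<in>{s..t}. norm (\<omega> u - \<omega>hat i u) \<le> \<epsilon>) \<and>
     (\<forall>i. (\<forall>\<omega>\<in>E i. P i \<in> Pset T D t (concat T s \<omega>bar \<omega>)) \<and>
          (\<exists>c>0. \<forall>\<omega>\<in>E i. c \<le> deg T D t (concat T s \<omega>bar \<omega>) (P i))) \<and>
     (\<forall>i. Vt T D \<xi> t (concat T s \<omega>bar (\<omega>hat i))
            \<le> integral\<^sup>L (P i) (\<lambda>\<omega>'. \<xi> (concat T t (concat T s \<omega>bar (\<omega>hat i)) \<omega>')) + \<epsilon>)"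
proof -
  let ?c = "\<lambda>\<omega>. concat T s \<omega>bar \<omega>"
  have c_in: "?c \<omega> \<in> Omega T 0" if "\<omega> \<in> Omega T s" for \<omega>
    using concat_in_Omega[OF assms(9) that assms(6)] assms(7,8) by simp
  have "\<forall>\<omega>\<in>Omega T s. \<exists>P e. robust_law T D \<xi> t \<epsilon> (?c \<omega>) P e"
    using robust_near_optimal_law[OF assms(4) _ c_in _ assms(11)] assms(5-8) c_in by simp
  then obtain Pf ef where Pf: "\<forall>\<omega>\<in>Omega T s. robust_law T D \<xi> t \<epsilon> (?c \<omega>) (Pf \<omega>) (ef \<omega>)"
    by metis
  then have "\<forall>\<omega>\<in>Omega T s. min \<epsilon> (ef \<omega>) > 0" using assms(11) by (simp add: robust_law_def)
  then show ?thesis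
  proof (rule Omega_ball_partition[OF assms(7,8)])
    fix c :: "nat \<Rightarrow> 'd path" and E :: "nat \<Rightarrow> 'd path set"
    assume c: "\<And>i. c i \<in> Omega T s" and E: "\<And>i. E i \<in> Ft T s t" "disjoint_family E"
      "(\<Union>i. E i) = Omega T s"
      and close: "\<And>i \<omega> u. \<omega> \<in> E i \<Longrightarrow> u \<in> {s..t} \<Longrightarrow> norm (\<omega> u - c i u) \<le> min \<epsilon> (ef (c i))"
    have robust: "robust_law T D \<xi> t \<epsilon> (?c (c i)) (Pf (c i)) (ef (c i))" for i
      using Pf c by blast
    have near: "Pf (c i) \<in> Pset T D t (?c \<omega>) \<and> min (ef (c i) / 2) 1 \<le> deg T D t (?c \<omega>) (Pf (c i))"
      if "\<omega> \<in> E i" for i \<omega>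
    proof -
      have "\<forall>u\<in>{s..t}. norm (c i u - \<omega> u) \<le> ef (c i)"
        using close[OF that] by (simp add: norm_minus_commute)
      then have "\<forall>u\<in>{0..t}. norm (?c (c i) u - ?c \<omega> u) \<le> ef (c i)"
        using robust[of i] assms(8) by (intro concat_close) (auto simp: robust_law_def)
      then show ?thesis using robust_law_near[OF robust] c_in that E(3) by blast
    qed
    show ?thesis
    proof (intro exI[of _ c] exI[of _ E] exI[of _ "\<lambda>i. Pf (c i)"] conjI allI ballI)
      show "\<exists>c'>0. \<forall>\<omega>\<in>E i. c' \<le> deg T D t (?c \<omega>) (Pf (c i))" for i
        using near robust[of i] by (intro exI[of _ "min (ef (c i) / 2) 1"]) (auto simp: robust_law_def)
    qed (use c E close near robust in \<open>auto simp: robust_law_def\<close>)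
  qed
qed

end
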